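(* Let $s,k\geq 2$. Then the $s$-stable Kneser graph $\operatorname{KG}(ks+1,k)_{s-\operatorname{stab}}$ is hom-idempotent, i.e., there is a homomorphism from $\operatorname{KG}(ks+1,k)_{s-\operatorname{stab}}\Box\operatorname{KG}(ks+1,k)_{s-\operatorname{stab}}$ to $\operatorname{KG}(ks+1,k)_{s-\operatorname{stab}}$.
   Context: For integers $s,k\geq 2$ and $n\geq ks$, a subset $S\subseteq[n]=\{1,\dots,n\}$ is $s$-stable if $s\leq |i-j|\leq n-s$ for all distinct $i,j\in S$. The $s$-stable Kneser graph $\operatorname{KG}(n,k)_{s-\operatorname{stab}}$ has as vertices the $s$-stable $k$-subsets of $[n]$, two vertices being adjacent iff they are disjoint. $G\Box H$ denotes the cartesian product of graphs (vertex set $V(G)\times V(H)$, $(g,h)\sim(g',h')$ iff one coordinate is equal and the other coordinates are adjacent). A homomorphism is an edge-preserving map between vertex sets. *)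

theory Defs
  imports Main
begin

definition s_stable :: "nat \<Rightarrow> nat \<Rightarrow> nat set \<Rightarrow> bool" where
  "s_stable n s S \<longleftrightarrow> S \<subseteq> {1..n} \<and>
     (\<forall>i\<in>S. \<forall>j\<in>S. i \<noteq> j \<longrightarrow>
        s \<le> nat \<bar>int i - int j\<bar> \<and> nat \<bar>int i - int j\<bar> \<le> n - s)"

definition stab_kneser_vertices :: "nat \<Rightarrow> nat \<Rightarrow> nat \<Rightarrow> nat set set" where
  "stab_kneser_vertices n k s = {S. s_stable n s S \<and> card S = k}"

definition stab_kneser_adj :: "nat set \<Rightarrow> nat set \<Rightarrow> bool" where
  "stab_kneser_adj A B \<longleftrightarrow> A \<inter> B = {}"

definition box_vertices :: "'a set \<Rightarrow> 'b set \<Rightarrow> ('a \<times> 'b) set" where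
  "box_vertices V W = V \<times> W"

definition box_adj :: "('a \<Rightarrow> 'a \<Rightarrow> bool) \<Rightarrow> ('b \<Rightarrow> 'b \<Rightarrow> bool) \<Rightarrow> 'a \<times> 'b \<Rightarrow> 'a \<times> 'b \<Rightarrow> bool" where
  "box_adj E F p q \<longleftrightarrow>
     (fst p = fst q \<and> F (snd p) (snd q)) \<or> (snd p = snd q \<and> E (fst p) (fst q))"

definition graph_hom :: "'a set \<Rightarrow> ('a \<Rightarrow> 'a \<Rightarrow> bool) \<Rightarrow> 'b set \<Rightarrow> ('b \<Rightarrow> 'b \<Rightarrow> bool) \<Rightarrow> ('a \<Rightarrow> 'b) \<Rightarrow> bool" where
  "graph_hom V E W F f \<longleftrightarrow> (\<forall>x\<in>V. f x \<in> W) \<and> (\<forall>x\<in>V. \<forall>y\<in>V. E x y \<longrightarrow> F (f x) (f y))"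

end

theory Submission
  imports Defs
begin

text \<open>Numbering the points of the cycle from \<open>0\<close>, an \<open>s\<close>-stable \<open>k\<close>-set \<open>Q\<close> on \<open>n = k s + 1\<close>
  points is a rotation of \<open>{0, s, \<dots>, (k - 1) s}\<close>: the arcs of length \<open>s\<close> starting at the points
  of \<open>Q\<close> are disjoint, so they cover all points but one, and walking in steps of \<open>s\<close> from just
  after the uncovered point visits exactly the points of \<open>Q\<close>. Thus the vertices are indexed by
  \<open>\<int>/n\<close>, rotations preserve disjointness, and \<open>(A\<^sub>a, A\<^sub>b) \<mapsto> A\<^sub>a\<^sub>+\<^sub>b\<close> is a homomorphism
  from the square of the graph to the graph.\<close>

lemma mod_add_right_cancel_nat:
  "(x + c) mod n = (y + c) mod n \<longleftrightarrow> x mod n = y mod (n::nat)"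
  by (simp add: nat_mod_eq_iff)

lemma abs_diff_mod_add:
  fixes x y r n :: nat
  assumes "y < n" "r < n" "x = (y + r) mod n"
  shows "nat \<bar>int x - int y\<bar> = r \<or> nat \<bar>int x - int y\<bar> = n - r"
proof (cases "y + r < n")
  case False
  then have "x = y + r - n" using assms by (simp add: le_mod_geq)
  then show ?thesis using assms False by auto
qed (use assms in auto)

lemma ex_mod_add_eq:
  fixes x y n :: nat
  assumes "x < n" "y < n"
  shows "\<exists>r<n. x = (y + r) mod n"
proof (cases "y \<le> x")
  case True
  then show ?thesis using assms by (intro exI[of _ "x - y"]) auto
next
  case False
  then show ?thesis using assms by (intro exI[of _ "n + x - y"]) (auto simp: le_mod_geq)
qed

definition cyclically_separated :: "nat \<Rightarrow> nat \<Rightarrow> nat set \<Rightarrow> bool" where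
  "cyclically_separated n s Q \<longleftrightarrow>
     Q \<subseteq> {..<n} \<and> (\<forall>q\<in>Q. \<forall>q'\<in>Q. \<forall>r. 0 < r \<and> r < s \<longrightarrow> q \<noteq> (q' + r) mod n)"

lemma s_stable_Suc_image_iff:
  assumes "s \<le> n"
  shows "s_stable n s (Suc ` Q) \<longleftrightarrow> cyclically_separated n s Q"
proof
  assume stable: "s_stable n s (Suc ` Q)"
  then have Q: "Q \<subseteq> {..<n}" by (auto simp: s_stable_def)
  have "q \<noteq> (q' + r) mod n" if qq': "q \<in> Q" "q' \<in> Q" and r: "0 < r" "r < s" for q q' r
  proof
    assume q: "q = (q' + r) mod n"
    have "q \<noteq> q'"
    proof
      assume "q = q'"
      then have "(0 + q') mod n = (r + q') mod n" using q qq' Q by (auto simp: add.commute)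
      then have "r mod n = 0" by (simp only: mod_add_right_cancel_nat) simp
      then show False using r assms by simp
    qed
    then have "s \<le> nat \<bar>int q - int q'\<bar> \<and> nat \<bar>int q - int q'\<bar> \<le> n - s"
      using stable qq' unfolding s_stable_def by force
    moreover have "nat \<bar>int q - int q'\<bar> = r \<or> nat \<bar>int q - int q'\<bar> = n - r"
      using abs_diff_mod_add[OF _ _ q] Q qq' r assms by auto
    ultimately show False using r by auto
  qed
  with Q show "cyclically_separated n s Q" by (auto simp: cyclically_separated_def)
next
  assume sep: "cyclically_separated n s Q"
  then have Q: "Q \<subseteq> {..<n}"
    and separated: "\<And>q q' r. q \<in> Q \<Longrightarrow> q' \<in> Q \<Longrightarrow> 0 < r \<Longrightarrow> r < s \<Longrightarrow> q \<noteq> (q' + r) mod n"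
    by (auto simp: cyclically_separated_def)
  have "s \<le> nat \<bar>int q - int q'\<bar> \<and> nat \<bar>int q - int q'\<bar> \<le> n - s"
    if qq': "q \<in> Q" "q' \<in> Q" "q \<noteq> q'" for q q'
  proof -
    have lt: "q < n" "q' < n" using Q qq' by auto
    obtain r where r: "r < n" "q = (q' + r) mod n"
      using ex_mod_add_eq[OF lt] by blast
    then have "0 < r" using qq' lt by (auto intro: gr0I)
    have "(q + (n - r)) mod n = (q' + r + (n - r)) mod n"
      by (simp only: r(2) mod_add_left_eq)
    also have "\<dots> = q'" using r lt by simp
    finally have "q' = (q + (n - r)) mod n" ..
    then have "s \<le> r" "s \<le> n - r"
      using separated[OF qq'(1,2) \<open>0 < r\<close>] separated[OF qq'(2,1), of "n - r"] r by force+
    then have "s \<le> d \<and> d \<le> n - s" if "d = r \<or> d = n - r" for d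
      using that r(1) by auto
    then show ?thesis using abs_diff_mod_add[OF lt(2) r] by blast
  qed
  then show "s_stable n s (Suc ` Q)" using Q by (auto simp: s_stable_def)
qed

definition mod_progression :: "nat \<Rightarrow> nat \<Rightarrow> nat \<Rightarrow> nat \<Rightarrow> nat set" where
  "mod_progression n s k a = (\<lambda>j. (a + j * s) mod n) ` {..<k}"

lemma card_mod_progression:
  assumes "0 < s" "k * s \<le> n"
  shows "card (mod_progression n s k a) = k"
proof -
  have "inj_on (\<lambda>j. (a + j * s) mod n) {..<k}"
  proof
    fix j j' assume j: "j \<in> {..<k}" "j' \<in> {..<k}" and eq: "(a + j * s) mod n = (a + j' * s) mod n"
    have "j * s < n" "j' * s < n"
      using j assms by (auto intro: less_le_trans[OF mult_strict_right_mono])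
    moreover have "(j * s) mod n = (j' * s) mod n"
      using eq by (metis add.commute mod_add_right_cancel_nat)
    ultimately show "j = j'" using assms by simp
  qed
  then show ?thesis by (simp add: mod_progression_def card_image)
qed

lemma cyclically_separated_mod_progression:
  assumes "0 < n" "k * s \<le> n"
  shows "cyclically_separated n s (mod_progression n s k a)"
  unfolding cyclically_separated_def
proof (intro conjI ballI allI impI)
  show "mod_progression n s k a \<subseteq> {..<n}"
    using assms by (auto simp: mod_progression_def)
next
  fix x y r assume "x \<in> mod_progression n s k a" "y \<in> mod_progression n s k a" and r: "0 < r \<and> r < s"
  then obtain j j' where j: "j < k" "j' < k" and xy: "x = (a + j * s) mod n" "y = (a + j' * s) mod n"
    by (auto simp: mod_progression_def)
  show "x \<noteq> (y + r) mod n"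
  proof
    assume "x = (y + r) mod n"
    then have "(j * s + a) mod n = (j' * s + r + a) mod n"
      using xy by (simp add: mod_simps add_ac)
    then have "(j * s) mod n = (j' * s + r) mod n"
      by (simp only: mod_add_right_cancel_nat)
    moreover have "j * s < n"
      using j r assms by (auto intro: less_le_trans[OF mult_strict_right_mono])
    moreover have "j' * s + r < n"
    proof -
      have "j' * s + r < Suc j' * s" using r by simp
      also have "\<dots> \<le> k * s" using j by (intro mult_le_mono1) simp
      finally show ?thesis using assms by simp
    qed
    ultimately have js: "j * s = j' * s + r" by simp
    show False
    proof (cases "j \<le> j'")
      case True
      then show False using js r mult_le_mono1[OF True, of s] by simp
    next
      case False
      then have "Suc j' * s \<le> j * s" by (intro mult_le_mono1) simp
      then show False using js r by simp
    qed
  qed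
qed

lemma mod_progression_shift_disjoint:
  assumes "mod_progression n s k a \<inter> mod_progression n s k b = {}"
  shows "mod_progression n s k ((a + c) mod n) \<inter> mod_progression n s k ((b + c) mod n) = {}"
proof (rule ccontr)
  assume "mod_progression n s k ((a + c) mod n) \<inter> mod_progression n s k ((b + c) mod n) \<noteq> {}"
  then obtain j j' where j: "j < k" "j' < k"
    and "((a + c) mod n + j * s) mod n = ((b + c) mod n + j' * s) mod n"
    by (auto simp: mod_progression_def)
  then have "(a + j * s + c) mod n = (b + j' * s + c) mod n"
    by (simp add: mod_simps add_ac)
  then have "(a + j * s) mod n = (b + j' * s) mod n"
    by (simp only: mod_add_right_cancel_nat)
  moreover have "(a + j * s) mod n \<in> mod_progression n s k a"
    "(b + j' * s) mod n \<in> mod_progression n s k b"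
    using j by (auto simp: mod_progression_def)
  ultimately show False using assms by auto
qed

lemma cyclically_separated_arcs_disjoint:
  assumes sep: "cyclically_separated n s Q"
    and "q \<in> Q" "q' \<in> Q" "r < s" "r' < s" "(q + r) mod n = (q' + r') mod n"
  shows "q = q' \<and> r = r'"
proof -
  have Q: "Q \<subseteq> {..<n}"
    and separated: "\<And>q q' r. q \<in> Q \<Longrightarrow> q' \<in> Q \<Longrightarrow> 0 < r \<Longrightarrow> r < s \<Longrightarrow> q \<noteq> (q' + r) mod n"
    using sep by (auto simp: cyclically_separated_def)
  have ordered: "q = q' \<and> r = r'"
    if qq': "q \<in> Q" "q' \<in> Q" and "r' < s" "r \<le> r'" and eq: "(q + r) mod n = (q' + r') mod n"
    for q q' r r'
  proof -
    have "(q + r) mod n = (q' + (r' - r) + r) mod n" using eq \<open>r \<le> r'\<close> by simp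
    then have "q mod n = (q' + (r' - r)) mod n" by (simp only: mod_add_right_cancel_nat)
    then have q: "q = (q' + (r' - r)) mod n" using Q qq' by auto
    then have "r' = r" using separated[OF qq', of "r' - r"] \<open>r' < s\<close> \<open>r \<le> r'\<close> by linarith
    then show ?thesis using q Q qq' by auto
  qed
  show ?thesis
  proof (cases "r \<le> r'")
    case True
    then show ?thesis using ordered assms by blast
  next
    case False
    then show ?thesis using ordered[where q = q' and q' = q and r = r' and r' = r] assms by auto
  qed
qed

text \<open>Counting: the \<open>k\<close> disjoint arcs of length \<open>s\<close> cover \<open>k * s\<close> of the \<open>k * s + 1\<close> points.\<close>
lemma cyclically_separated_arcs_miss_one_point:
  assumes sep: "cyclically_separated n s Q" and "card Q = k" "n = k * s + 1"
  obtains u where "u < n" "\<And>q r. q \<in> Q \<Longrightarrow> r < s \<Longrightarrow> (q + r) mod n \<noteq> u"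
    "\<And>v. v < n \<Longrightarrow> v \<noteq> u \<Longrightarrow> \<exists>q\<in>Q. \<exists>r<s. v = (q + r) mod n"
proof -
  define U where "U = (\<lambda>(q, r). (q + r) mod n) ` (Q \<times> {..<s})"
  have "inj_on (\<lambda>(q, r). (q + r) mod n) (Q \<times> {..<s})"
    using cyclically_separated_arcs_disjoint[OF sep] by (auto simp: inj_on_def)
  then have "card U = k * s"
    using \<open>card Q = k\<close> by (simp add: U_def card_image card_cartesian_product)
  moreover have "U \<subseteq> {..<n}" using assms by (auto simp: U_def)
  ultimately have "card ({..<n} - U) = 1"
    using assms by (simp add: card_Diff_subset finite_subset)
  then obtain u where u: "{..<n} - U = {u}" by (rule card_1_singletonE)
  then have "v \<in> U" if "v < n" "v \<noteq> u" for v using that by blast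
  then have "\<exists>q\<in>Q. \<exists>r<s. v = (q + r) mod n" if "v < n" "v \<noteq> u" for v
    using that unfolding U_def by fastforce
  with u show thesis by (intro that) (auto simp: U_def)
qed

lemma arc_start_if_after_gap:
  fixes n :: nat
  assumes "Q \<subseteq> {..<n}" "w < n" "q \<in> Q" "r < s" "(w + 1) mod n = (q + r) mod n"
    and gap: "\<And>q r. q \<in> Q \<Longrightarrow> r + 1 < s \<Longrightarrow> (q + r) mod n \<noteq> w"
  shows "(w + 1) mod n \<in> Q"
proof -
  have "r = 0"
  proof (rule ccontr)
    assume "r \<noteq> 0"
    then have "(w + 1) mod n = (q + (r - 1) + 1) mod n" using assms(5) by simp
    then have "(q + (r - 1)) mod n = w" using \<open>w < n\<close> by (simp only: mod_add_right_cancel_nat) simp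
    then show False using gap[OF \<open>q \<in> Q\<close>, of "r - 1"] \<open>r < s\<close> \<open>r \<noteq> 0\<close> by simp
  qed
  then show ?thesis using assms by auto
qed

text \<open>Starting right after the uncovered point, every step of length \<open>s\<close> lands on the start
  of the next arc.\<close>
lemma cyclically_separated_eq_mod_progression:
  assumes sep: "cyclically_separated n s Q" and "card Q = k" "n = k * s + 1" "0 < s"
  obtains a where "Q = mod_progression n s k a"
proof -
  have Q: "Q \<subseteq> {..<n}" using sep by (simp add: cyclically_separated_def)
  obtain u where u: "u < n" and uncovered: "\<And>q r. q \<in> Q \<Longrightarrow> r < s \<Longrightarrow> (q + r) mod n \<noteq> u"
    and covered: "\<And>v. v < n \<Longrightarrow> v \<noteq> u \<Longrightarrow> \<exists>q\<in>Q. \<exists>r<s. v = (q + r) mod n"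
    using cyclically_separated_arcs_miss_one_point[OF assms(1-3)] by blast
  define a where "a = (u + 1) mod n"
  have avoids_u: "(a + j * s) mod n \<noteq> u" if "j < k" for j
  proof
    assume "(a + j * s) mod n = u"
    then have "((1 + j * s) + u) mod n = (0 + u) mod n"
      using u by (simp add: a_def mod_simps add_ac)
    then have "(1 + j * s) mod n = 0" by (simp only: mod_add_right_cancel_nat) simp
    moreover have "1 + j * s < n"
      using that assms by (auto intro: mult_strict_right_mono)
    ultimately show False by simp
  qed
  have "(a + j * s) mod n \<in> Q" if "j < k" for j
    using that
  proof (induction j)
    case 0
    obtain q r where "q \<in> Q" "r < s" "(u + 1) mod n = (q + r) mod n"
      using covered[of a] avoids_u[OF 0] u by (auto simp: a_def)
    then show ?case
      using arc_start_if_after_gap[OF Q u] uncovered by (simp add: a_def)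
  next
    case (Suc j)
    define p where "p = (a + j * s) mod n"
    have "p \<in> Q" using Suc by (simp add: p_def)
    define w where "w = (p + (s - 1)) mod n"
    have next_p: "(a + Suc j * s) mod n = (w + 1) mod n"
      using \<open>0 < s\<close> by (simp add: w_def p_def mod_simps add_ac)
    have "w < n" using u by (simp add: w_def)
    obtain q r where "q \<in> Q" "r < s" "(w + 1) mod n = (q + r) mod n"
      using covered[of "(w + 1) mod n"] avoids_u[OF Suc.prems] u next_p by auto
    moreover have "(q + r) mod n \<noteq> w" if "q \<in> Q" "r + 1 < s" for q r
      using cyclically_separated_arcs_disjoint[OF sep that(1) \<open>p \<in> Q\<close>, of r "s - 1"] that
      by (auto simp: w_def)
    ultimately show ?case
      using arc_start_if_after_gap[OF Q \<open>w < n\<close>] next_p by simp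
  qed
  then have "mod_progression n s k a \<subseteq> Q" by (auto simp: mod_progression_def)
  moreover have "card (mod_progression n s k a) = card Q"
    using card_mod_progression assms by simp
  moreover have "finite Q" using Q finite_subset by blast
  ultimately show thesis using that card_subset_eq by metis
qed

lemma stab_kneser_vertices_eq_rotations:
  assumes "0 < s" "0 < k" "n = k * s + 1"
  shows "stab_kneser_vertices n k s = range (\<lambda>a. Suc ` mod_progression n s k a)"
proof -
  have "s \<le> n" using assms by (cases k) auto
  have "B \<in> range (\<lambda>a. Suc ` mod_progression n s k a)" if "B \<in> stab_kneser_vertices n k s" for B
  proof -
    have stable: "s_stable n s B" and "card B = k"
      using that by (auto simp: stab_kneser_vertices_def)
    then have "B \<subseteq> {1..n}" by (simp add: s_stable_def)
    then have "B = Suc ` (\<lambda>x. x - 1) ` B"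
      by (force simp: image_image)
    define Q where "Q = (\<lambda>x. x - 1) ` B"
    have B: "B = Suc ` Q" using \<open>B = Suc ` (\<lambda>x. x - 1) ` B\<close> by (simp add: Q_def)
    have "cyclically_separated n s Q"
      using stable B s_stable_Suc_image_iff[OF \<open>s \<le> n\<close>] by simp
    moreover have "card Q = k"
      using \<open>card B = k\<close> B by (simp add: card_image)
    ultimately obtain a where "Q = mod_progression n s k a"
      using cyclically_separated_eq_mod_progression assms by blast
    with B show ?thesis by simp
  qed
  moreover have "Suc ` mod_progression n s k a \<in> stab_kneser_vertices n k s" for a
    using assms s_stable_Suc_image_iff[OF \<open>s \<le> n\<close>] cyclically_separated_mod_progression
    by (simp add: stab_kneser_vertices_def card_image card_mod_progression)
  ultimately show ?thesis by blast
qed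

lemma graph_hom_box_from_parametrisation:
  fixes P :: "'p \<Rightarrow> 'v" and op :: "'p \<Rightarrow> 'p \<Rightarrow> 'p"
  assumes V: "V = range P"
    and comm: "\<And>a b. op a b = op b a"
    and adj: "\<And>a b c. E (P a) (P b) \<Longrightarrow> E (P (op a c)) (P (op b c))"
  shows "\<exists>f. graph_hom (box_vertices V V) (box_adj E E) V E f"
proof -
  define f where "f x = P (op (inv P (fst x)) (inv P (snd x)))" for x
  have inv: "P (inv P X) = X" if "X \<in> V" for X
    using that V by (simp add: f_inv_into_f)
  have "E (f x) (f y)" if "x \<in> V \<times> V" "y \<in> V \<times> V" "box_adj E E x y" for x y
  proof -
    from \<open>box_adj E E x y\<close> consider "fst x = fst y" "E (snd x) (snd y)"
      | "snd x = snd y" "E (fst x) (fst y)"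
      by (auto simp: box_adj_def)
    then show ?thesis
    proof cases
      case 1
      then have "E (P (inv P (snd x))) (P (inv P (snd y)))" using inv that by auto
      then have "E (P (op (inv P (snd x)) (inv P (fst x)))) (P (op (inv P (snd y)) (inv P (fst x))))"
        by (rule adj)
      then show ?thesis using 1 by (simp add: f_def comm)
    next
      case 2
      then have "E (P (inv P (fst x))) (P (inv P (fst y)))" using inv that by auto
      then show ?thesis using adj 2 by (simp add: f_def)
    qed
  qed
  moreover have "f x \<in> V" for x using V by (simp add: f_def)
  ultimately show ?thesis unfolding graph_hom_def box_vertices_def by blast
qed

theorem mainTheorem2:
  fixes s k :: nat
  assumes "s \<ge> 2" and "k \<ge> 2"
  shows "\<exists>f. graph_hom
            (box_vertices (stab_kneser_vertices (k*s+1) k s) (stab_kneser_vertices (k*s+1) k s))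
            (box_adj stab_kneser_adj stab_kneser_adj)
            (stab_kneser_vertices (k*s+1) k s) stab_kneser_adj f"
proof (rule graph_hom_box_from_parametrisation)
  define n where "n = k * s + 1"
  show "stab_kneser_vertices (k * s + 1) k s = range (\<lambda>a. Suc ` mod_progression n s k a)"
    using stab_kneser_vertices_eq_rotations assms by (simp add: n_def)
  show "(a + b) mod n = (b + a) mod n" for a b by (simp add: add.commute)
  show "stab_kneser_adj (Suc ` mod_progression n s k ((a + c) mod n))
          (Suc ` mod_progression n s k ((b + c) mod n))"
    if "stab_kneser_adj (Suc ` mod_progression n s k a) (Suc ` mod_progression n s k b)" for a b c
    using that mod_progression_shift_disjoint by (auto simp: stab_kneser_adj_def image_Int[symmetric])
qed

end
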